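(* Let $a,b$ be integers with $0<b<a$, let $S=\langle a,a+1,\ldots,a+b\rangle$ with conductor $c$ and genus $g$, and let $m\ge 2c-1$. Let $m=m_1<m_2<\cdots<m_t$ be integers such that $\{m_1,\ldots,m_t\}$ is amenable, and assume that $\{m_1,\ldots,m_t\}\cap[m,m+a+b)=\{m,m+1,\ldots,m+l-1\}$ for some positive integer $l$. Then $$\sharp\mathrm D(m_1,\ldots,m_t)=m-2g+t+\sum_{j=1}^{l-1}\left\lceil\frac{a-j}{b}\right\rceil.$$
   Context: The genus of a numerical semigroup $S$ is $g=\sharp(\mathbb N\setminus S)$ and its conductor $c$ is the least element of $S$ with $c+n\in S$ for all $n\in\mathbb N$. For $x\in S$, $\mathrm D(x)=\{\alpha\in S\mid x-\alpha\in S\}$, and $\mathrm D(x_1,\ldots,x_t)=\mathrm D(x_1)\cup\cdots\cup\mathrm D(x_t)$. A set $M=\{m_1<\cdots<m_t\}\subseteq S$ with $2c-1\le m=m_1$ is amenable if $\mathrm D(m_i)\cap[m,\infty)\subseteq M$ for all $i$. *)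

theory Defs
  imports Complex_Main
begin

inductive_set gen_semigroup :: "nat set \<Rightarrow> nat set" for A :: "nat set" where
  zero: "0 \<in> gen_semigroup A"
| add: "x \<in> A \<Longrightarrow> y \<in> gen_semigroup A \<Longrightarrow> x + y \<in> gen_semigroup A"

definition conductor :: "nat set \<Rightarrow> nat" where
  "conductor S = (LEAST c. c \<in> S \<and> (\<forall>n. c + n \<in> S))"

definition genus :: "nat set \<Rightarrow> nat" where
  "genus S = card (UNIV - S)"

definition Dset :: "nat set \<Rightarrow> nat \<Rightarrow> nat set" where
  "Dset S x = {\<alpha> \<in> S. \<alpha> \<le> x \<and> x - \<alpha> \<in> S}"

definition Dunion :: "nat set \<Rightarrow> nat set \<Rightarrow> nat set" where
  "Dunion S M = (\<Union>x\<in>M. Dset S x)"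

definition amenable :: "nat set \<Rightarrow> nat set \<Rightarrow> bool" where
  "amenable S M \<longleftrightarrow> finite M \<and> M \<noteq> {} \<and> M \<subseteq> S \<and>
     2 * conductor S - 1 \<le> Min M \<and> (\<forall>x\<in>M. Dset S x \<inter> {Min M..} \<subseteq> M)"

end

theory Submission
  imports Defs
begin

text \<open>
  If all gaps of S lie below c and \<open>m \<ge> 2c - 1\<close>, then every \<open>x \<le> m\<close> either lies in
  \<open>D(m)\<close> or exactly one of \<open>x\<close>, \<open>m - x\<close> is a gap, so \<open>\<sharp>D(m) = m + 1 - 2g\<close>.
  For an amenable M with minimum m, \<open>D(M)\<close> is the disjoint union of \<open>D(m)\<close>, \<open>M - {m}\<close> and
  the numbers \<open>m - h\<close> for the gaps h with \<open>h + y \<in> S\<close> for some \<open>0 < y < l\<close>: by amenability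
  one may subtract generators from \<open>m + y \<in> M\<close> until \<open>y\<close> falls into the window \<open>[m, m + l)\<close>.
  In \<open>S = \<langle>a, \<dots>, a + b\<rangle>\<close> the gaps h for which \<open>h + j\<close> is the first element of S above h
  are the numbers \<open>(i + 1)a - j\<close> with \<open>ib + j < a\<close>, and there are \<open>\<lceil>(a - j)/b\<rceil>\<close> of them.
\<close>

lemma gen_semigroup_generator: "x \<in> A \<Longrightarrow> x \<in> gen_semigroup A"
  using gen_semigroup.add[OF _ gen_semigroup.zero] by simp

lemma gen_semigroup_split:
  assumes "x \<in> gen_semigroup A" "x \<noteq> 0"
  obtains s where "s \<in> A" "s \<le> x" "x - s \<in> gen_semigroup A"
  using assms by (cases rule: gen_semigroup.cases) auto

lemma mem_interval_semigroup_iff: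
  fixes a b x :: nat
  shows "x \<in> gen_semigroup {a..a+b} \<longleftrightarrow> (\<exists>k. k * a \<le> x \<and> x \<le> k * (a + b))"
proof
  show "\<exists>k. k * a \<le> x \<and> x \<le> k * (a + b)" if "x \<in> gen_semigroup {a..a+b}"
    using that
  proof (induction rule: gen_semigroup.induct)
    case zero
    show ?case by auto
  next
    case (add s y)
    then obtain k where "k * a \<le> y" "y \<le> k * (a + b)" by blast
    with add.hyps(1) show ?case
      by (intro exI[of _ "Suc k"]) auto
  qed
next
  assume "\<exists>k. k * a \<le> x \<and> x \<le> k * (a + b)"
  then obtain k where "k * a \<le> x" "x \<le> k * (a + b)" by blast
  then show "x \<in> gen_semigroup {a..a+b}"
  proof (induction k arbitrary: x)
    case 0
    then show ?case using gen_semigroup.zero by simp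
  next
    case (Suc k)
    \<comment> \<open>Peel off a generator so that the rest lies in the range of sums of k generators.\<close>
    define s where "s = max a (x - k * (a + b))"
    have s: "s \<in> {a..a+b}" "s \<le> x" "k * a \<le> x - s" "x - s \<le> k * (a + b)"
      using Suc.prems by (auto simp: s_def max_def algebra_simps)
    then have "s + (x - s) \<in> gen_semigroup {a..a+b}"
      using Suc.IH gen_semigroup.add by blast
    with s show ?case by simp
  qed
qed

lemma not_mem_interval_semigroup:
  fixes a b i x :: nat
  assumes "i * (a + b) < x" "x < Suc i * a"
  shows "x \<notin> gen_semigroup {a..a+b}"
proof
  assume "x \<in> gen_semigroup {a..a+b}"
  then obtain k where k: "k * a \<le> x" "x \<le> k * (a + b)"
    by (auto simp: mem_interval_semigroup_iff)
  show False
  proof (cases "k \<le> i")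
    case True
    then have "k * (a + b) \<le> i * (a + b)" by simp
    with k assms show False by linarith
  next
    case False
    then have "Suc i * a \<le> k * a" by (intro mult_le_mono1) simp
    with k assms show False by linarith
  qed
qed

lemma interval_semigroup_ge_square:
  fixes a b n :: nat
  assumes "0 < a" "0 < b" "a * a \<le> n"
  shows "n \<in> gen_semigroup {a..a+b}"
proof -
  define k where "k = n div a"
  have "a \<le> k"
    using assms div_le_mono[of "a * a" n a] by (simp add: k_def)
  moreover have "k \<le> k * b" using assms(2) by simp
  moreover have "n = k * a + n mod a" "n mod a < a"
    using assms(1) by (simp_all add: k_def)
  ultimately have "n \<le> k * a + k * b" by linarith
  then have "n \<le> k * (a + b)" by (simp add: algebra_simps)
  moreover have "k * a \<le> n" by (simp add: k_def div_times_less_eq_dividend)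
  ultimately show ?thesis unfolding mem_interval_semigroup_iff by blast
qed

lemma ge_conductor_mem:
  assumes "\<And>n. c \<le> n \<Longrightarrow> n \<in> S" "conductor S \<le> n"
  shows "n \<in> S"
proof -
  have "conductor S \<in> S \<and> (\<forall>n. conductor S + n \<in> S)"
    unfolding conductor_def by (rule LeastI[of _ c]) (use assms(1) in auto)
  then show ?thesis using assms(2) by (metis le_add_diff_inverse)
qed

lemma card_Dset_ge_twice_conductor:
  fixes S :: "nat set" and c m :: nat
  assumes gaps: "\<And>h. h \<notin> S \<Longrightarrow> h < c" and m: "2 * c - 1 \<le> m"
  shows "card (Dset S m) + 2 * genus S = m + 1"
proof -
  let ?G = "UNIV - S"
  let ?I = "(\<lambda>h. m - h) ` ?G"
  have finG: "finite ?G" by (rule finite_subset[of _ "{..<c}"]) (use gaps in auto)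
  have Gm: "h \<le> m" if "h \<in> ?G" for h using gaps[of h] that m by auto
  have "inj_on (\<lambda>h. m - h) ?G"
    by (rule inj_onI) (metis Gm diff_diff_cancel)
  then have cI: "card ?I = card ?G" by (rule card_image)
  have cover: "{..m} = Dset S m \<union> ?G \<union> ?I"
  proof (intro set_eqI iffI)
    fix x assume "x \<in> {..m}"
    then show "x \<in> Dset S m \<union> ?G \<union> ?I"
      unfolding Dset_def by (cases "x \<in> S") (auto intro!: image_eqI[of x _ "m - x"])
  qed (auto simp: Dset_def Gm)
  \<comment> \<open>Two gaps are both below c, so they cannot add up to m \<ge> 2c - 1.\<close>
  have "?G \<inter> ?I = {}"
  proof -
    have "h \<noteq> m - h'" if "h \<in> ?G" "h' \<in> ?G" for h h'
      using gaps[of h] gaps[of h'] that Gm[of h'] m by auto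
    then show ?thesis by blast
  qed
  moreover have "Dset S m \<inter> ?G = {}" "Dset S m \<inter> ?I = {}"
    by (auto simp: Dset_def Gm)
  moreover have "finite (Dset S m)" by (simp add: Dset_def)
  ultimately have "card {..m} = card (Dset S m) + card ?G + card ?I"
    unfolding cover using finG by (simp add: card_Un_disjoint Int_Un_distrib2)
  then show ?thesis using cI by (simp add: genus_def)
qed

definition gaps_entering :: "nat set \<Rightarrow> nat \<Rightarrow> nat set" where
  "gaps_entering S l = {h. h \<notin> S \<and> (\<exists>y\<in>{1..<l}. h + y \<in> S)}"

definition gaps_first_entering :: "nat set \<Rightarrow> nat \<Rightarrow> nat set" where
  "gaps_first_entering S j = {h. h \<notin> S \<and> h + j \<in> S \<and> (\<forall>y\<in>{1..<j}. h + y \<notin> S)}"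

lemma card_gaps_entering:
  assumes "finite (UNIV - S)"
  shows "card (gaps_entering S l) = (\<Sum>j\<in>{1..<l}. card (gaps_first_entering S j))"
proof (induction l)
  case 0
  then show ?case by (simp add: gaps_entering_def)
next
  case (Suc l)
  have split: "gaps_entering S (Suc l) = gaps_entering S l \<union> gaps_first_entering S l"
  proof (intro set_eqI iffI)
    fix h assume "h \<in> gaps_entering S l \<union> gaps_first_entering S l"
    then show "h \<in> gaps_entering S (Suc l)"
    proof
      assume h: "h \<in> gaps_first_entering S l"
      then have "l \<in> {1..<Suc l}" by (cases l) (auto simp: gaps_first_entering_def)
      with h show ?thesis by (auto simp: gaps_entering_def gaps_first_entering_def)
    qed (auto simp: gaps_entering_def)
  qed (auto simp: gaps_entering_def gaps_first_entering_def less_Suc_eq)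
  have "finite (gaps_entering S l)" "finite (gaps_first_entering S l)"
    by (auto intro: finite_subset[OF _ assms] simp: gaps_entering_def gaps_first_entering_def)
  moreover have "gaps_entering S l \<inter> gaps_first_entering S l = {}"
    by (auto simp: gaps_entering_def gaps_first_entering_def)
  moreover have "gaps_first_entering S 0 = {}"
    by (auto simp: gaps_first_entering_def)
  ultimately show ?case
    using Suc.IH by (simp add: split card_Un_disjoint sum.op_ivl_Suc)
qed

text \<open>The gaps of \<open>\<langle>a, \<dots>, a + b\<rangle>\<close> are the numbers strictly between \<open>i(a + b)\<close> and
  \<open>(i + 1)a\<close>, so \<open>h + j\<close> is the first element above the gap h exactly when \<open>h + j = (i + 1)a\<close>.\<close>

lemma gaps_first_entering_interval_semigroup:
  fixes a b j :: nat
  assumes "0 < a" "0 < j"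
  shows "gaps_first_entering (gen_semigroup {a..a+b}) j = (\<lambda>i. Suc i * a - j) ` {i. i * b + j < a}"
proof (intro set_eqI iffI)
  let ?S = "gen_semigroup {a..a+b}"
  fix h assume "h \<in> gaps_first_entering ?S j"
  then have h: "h \<notin> ?S" "h + j \<in> ?S" "\<And>y. 0 < y \<Longrightarrow> y < j \<Longrightarrow> h + y \<notin> ?S"
    by (auto simp: gaps_first_entering_def)
  obtain k where k: "k * a \<le> h + j" "h + j \<le> k * (a + b)"
    using h(2) by (auto simp: mem_interval_semigroup_iff)
  then obtain i where i: "k = Suc i" using assms(2) by (cases k) auto
  have right_end: "h + j = Suc i * a"
  proof (rule ccontr)
    assume "h + j \<noteq> Suc i * a"
    then have "h + (j - 1) \<in> ?S"
      using k i by (auto simp: mem_interval_semigroup_iff intro!: exI[of _ k])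
    then show False using h(1) h(3)[of "j - 1"] assms(2) by (cases "j = 1") auto
  qed
  have "i * b + j < a"
  proof (rule ccontr)
    assume "\<not> i * b + j < a"
    then have le: "h \<le> i * (a + b)" using right_end by (simp add: algebra_simps)
    show False
    proof (cases "i * a \<le> h")
      case True
      then have "h \<in> ?S" using le by (auto simp: mem_interval_semigroup_iff)
      with h(1) show False ..
    next
      case False
      have "h + (i * a - h) \<in> ?S" using False by (auto simp: mem_interval_semigroup_iff)
      moreover have "0 < i * a - h" "i * a - h < j" using False right_end assms(1) by auto
      ultimately show False using h(3) by blast
    qed
  qed
  moreover have "h = Suc i * a - j" using right_end by simp
  ultimately show "h \<in> (\<lambda>i. Suc i * a - j) ` {i. i * b + j < a}" by blast
next
  fix h assume "h \<in> (\<lambda>i. Suc i * a - j) ` {i. i * b + j < a}"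
  then obtain i where i: "i * b + j < a" "h = Suc i * a - j" by blast
  then have right_end: "h + j = Suc i * a" by (simp add: algebra_simps)
  have "Suc i * a \<le> Suc i * (a + b)" by (rule mult_le_mono2) simp
  then have "h + j \<in> gen_semigroup {a..a+b}"
    unfolding mem_interval_semigroup_iff right_end by blast
  moreover have before: "h + y \<notin> gen_semigroup {a..a+b}" if "y < j" for y
  proof (rule not_mem_interval_semigroup)
    show "i * (a + b) < h + y" using i by (simp add: algebra_simps)
    show "h + y < Suc i * a" using right_end that by linarith
  qed
  ultimately show "h \<in> gaps_first_entering (gen_semigroup {a..a+b}) j"
    using before[of 0] assms(2) by (auto simp: gaps_first_entering_def)
qed

lemma card_mult_add_less_eq_ceiling:
  fixes a b j :: nat
  assumes "0 < b" "j < a + b"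
  shows "int (card {i. i * b + j < a}) = \<lceil>real_of_int (int a - int j) / real b\<rceil>"
proof -
  define C where "C = \<lceil>real_of_int (int a - int j) / real b\<rceil>"
  have "i * b + j < a \<longleftrightarrow> i < nat C" for i
  proof -
    have "int i < C \<longleftrightarrow> real i * real b < real a - real j"
      using assms(1) by (simp add: C_def less_ceiling_iff pos_less_divide_eq)
    also have "\<dots> \<longleftrightarrow> real (i * b + j) < real a" unfolding of_nat_add of_nat_mult by linarith
    finally show ?thesis by linarith
  qed
  then have "{i. i * b + j < a} = {..<nat C}" by auto
  moreover have "0 \<le> C"
    using assms by (simp add: C_def zero_le_ceiling pos_less_divide_eq)
  ultimately show ?thesis by (simp add: C_def)
qed

lemma card_gaps_first_entering_interval_semigroup:
  fixes a b j :: nat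
  assumes "0 < a" "0 < b" "0 < j" "j < a + b"
  shows "int (card (gaps_first_entering (gen_semigroup {a..a+b}) j))
           = \<lceil>real_of_int (int a - int j) / real b\<rceil>"
proof -
  have "inj_on (\<lambda>i. Suc i * a - j) {i. i * b + j < a}"
  proof (rule inj_onI)
    fix x y assume "x \<in> {i. i * b + j < a}" "y \<in> {i. i * b + j < a}" "Suc x * a - j = Suc y * a - j"
    moreover have "j < Suc x * a" "j < Suc y * a" using \<open>x \<in> _\<close> \<open>y \<in> _\<close> by auto
    ultimately have "Suc x * a = Suc y * a" by linarith
    then show "x = y" using assms(1) by simp
  qed
  then show ?thesis
    using assms by (simp add: gaps_first_entering_interval_semigroup card_image card_mult_add_less_eq_ceiling)
qed

lemma card_gaps_entering_interval_semigroup: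
  fixes a b l :: nat
  assumes "0 < a" "0 < b" "0 < l" "l \<le> a + b"
  shows "int (card (gaps_entering (gen_semigroup {a..a+b}) l))
           = (\<Sum>j=1..l-1. \<lceil>real_of_int (int a - int j) / real b\<rceil>)"
proof -
  let ?S = "gen_semigroup {a..a+b}"
  have "x < a * a" if "x \<notin> ?S" for x
    using interval_semigroup_ge_square[OF assms(1,2)] that not_le by blast
  then have "finite (UNIV - ?S)" by (meson Diff_iff finite_lessThan finite_subset lessThan_iff subsetI)
  then have "int (card (gaps_entering ?S l)) = (\<Sum>j\<in>{1..<l}. int (card (gaps_first_entering ?S j)))"
    by (simp add: card_gaps_entering of_nat_sum)
  also have "\<dots> = (\<Sum>j=1..l-1. \<lceil>real_of_int (int a - int j) / real b\<rceil>)"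
  proof (rule sum.cong)
    show "{1..<l} = {1..l-1}" using assms(3) by auto
    fix j assume "j \<in> {1..l-1}"
    then show "int (card (gaps_first_entering ?S j)) = \<lceil>real_of_int (int a - int j) / real b\<rceil>"
      using assms by (intro card_gaps_first_entering_interval_semigroup) auto
  qed
  finally show ?thesis .
qed

text \<open>Subtracting generators from \<open>h + y\<close> walks \<open>m + y\<close> down inside M, by amenability, until it
  reaches the window, where the remaining shift \<open>y\<close> is below \<open>l\<close>.\<close>

lemma gap_enters_within_window:
  fixes A M :: "nat set" and N m l h y :: nat
  defines "S \<equiv> gen_semigroup A"
  assumes gens: "A \<subseteq> {1..N}"
    and large: "\<And>n. m \<le> n \<Longrightarrow> n \<in> S"
    and closed: "\<And>x. x \<in> M \<Longrightarrow> Dset S x \<inter> {m..} \<subseteq> M"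
    and window: "M \<inter> {m..<m+N} \<subseteq> {m..<m+l}"
    and "h \<notin> S" "m + y \<in> M" "h + y \<in> S"
  shows "h \<in> gaps_entering S l"
  using \<open>m + y \<in> M\<close> \<open>h + y \<in> S\<close>
proof (induction y rule: less_induct)
  case (less y)
  have "0 < y" using less.prems(2) \<open>h \<notin> S\<close> by (metis add_0_right gr0I)
  show ?case
  proof (cases "y < N")
    case True
    then have "y < l" using window less.prems(1) by auto
    with \<open>0 < y\<close> show ?thesis using less.prems(2) \<open>h \<notin> S\<close> by (auto simp: gaps_entering_def)
  next
    case False
    obtain s where s: "s \<in> A" "s \<le> h + y" "h + y - s \<in> S"
      using gen_semigroup_split less.prems(2) \<open>0 < y\<close> unfolding S_def by blast
    have s_range: "0 < s" "s \<le> y" using s(1) gens False by auto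
    have "(m + y) - (m + (y - s)) = s" using s_range by simp
    then have "m + (y - s) \<in> Dset S (m + y) \<inter> {m..}"
      using large[of "m + (y - s)"] gen_semigroup_generator[OF s(1)] by (auto simp: Dset_def S_def)
    then have "m + (y - s) \<in> M" using closed less.prems(1) by blast
    moreover have "h + (y - s) \<in> S" using s(3) s_range by simp
    ultimately show ?thesis using less.IH[of "y - s"] s_range by simp
  qed
qed

context
  fixes S M :: "nat set" and c m l :: nat
  assumes zero: "0 \<in> S"
    and large: "\<And>n. c \<le> n \<Longrightarrow> n \<in> S"
    and m_ge: "2 * c - 1 \<le> m"
    and m_min: "m \<in> M" "\<And>x. x \<in> M \<Longrightarrow> m \<le> x"
    and closed: "\<And>x. x \<in> M \<Longrightarrow> Dset S x \<inter> {m..} \<subseteq> M"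
    and window: "{m..<m+l} \<subseteq> M"
    and entering: "\<And>h y. h \<notin> S \<Longrightarrow> m + y \<in> M \<Longrightarrow> h + y \<in> S \<Longrightarrow> h \<in> gaps_entering S l"
begin

private lemma gap_less_conductor: "h \<notin> S \<Longrightarrow> h < c"
  using large not_less by blast

private lemma conductor_le_m: "c \<le> m"
  using m_ge by linarith

lemma Dunion_eq_Dset_gaps_entering:
  "Dunion S M = Dset S m \<union> (\<lambda>h. m - h) ` gaps_entering S l \<union> (M - {m})"
proof (intro set_eqI iffI)
  fix \<alpha> assume "\<alpha> \<in> Dunion S M"
  then obtain x where x: "x \<in> M" "\<alpha> \<in> Dset S x" by (auto simp: Dunion_def)
  show "\<alpha> \<in> Dset S m \<union> (\<lambda>h. m - h) ` gaps_entering S l \<union> (M - {m})"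
  proof (cases "m < \<alpha>")
    case True
    then show ?thesis using closed[OF x(1)] x(2) by auto
  next
    case False
    have "m - \<alpha> \<in> gaps_entering S l" if "m - \<alpha> \<notin> S"
    proof (rule entering[OF that])
      show "m + (x - m) \<in> M" using x(1) m_min(2)[OF x(1)] by simp
      show "m - \<alpha> + (x - m) \<in> S" using x(2) m_min(2)[OF x(1)] False by (simp add: Dset_def)
    qed
    with x(2) False show ?thesis by (force simp: Dset_def)
  qed
next
  fix \<alpha> assume "\<alpha> \<in> Dset S m \<union> (\<lambda>h. m - h) ` gaps_entering S l \<union> (M - {m})"
  then consider "\<alpha> \<in> Dset S m" | h where "\<alpha> = m - h" "h \<in> gaps_entering S l" | "\<alpha> \<in> M"
    by blast
  then show "\<alpha> \<in> Dunion S M"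
  proof cases
    case 1
    then show ?thesis using m_min(1) by (auto simp: Dunion_def)
  next
    case (2 h)
    then obtain y where y: "h \<notin> S" "1 \<le> y" "y < l" "h + y \<in> S"
      by (auto simp: gaps_entering_def)
    \<comment> \<open>\<open>m - h \<ge> 2c - 1 - (c - 1) = c\<close> because the gap h is below c.\<close>
    have "c \<le> \<alpha>" using 2(1) gap_less_conductor[OF y(1)] m_ge by linarith
    moreover have "m + y - \<alpha> = h + y" using 2(1) gap_less_conductor[OF y(1)] conductor_le_m by simp
    ultimately have "\<alpha> \<in> Dset S (m + y)" using large y(4) 2(1) by (simp add: Dset_def)
    moreover have "m + y \<in> M" using window y(3) by auto
    ultimately show ?thesis by (auto simp: Dunion_def)
  next
    case 3
    then have "\<alpha> \<in> S" using large m_min(2) conductor_le_m le_trans by blast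
    then have "\<alpha> \<in> Dset S \<alpha>" using zero by (simp add: Dset_def)
    with 3 show ?thesis by (auto simp: Dunion_def)
  qed
qed

lemma card_Dunion_eq:
  assumes "finite M"
  shows "card (Dunion S M) = card (Dset S m) + card (gaps_entering S l) + (card M - 1)"
proof -
  let ?H = "gaps_entering S l"
  have H_le: "h \<le> m" if "h \<in> ?H" for h
    using that gap_less_conductor[of h] conductor_le_m by (auto simp: gaps_entering_def)
  have "finite ?H"
    by (rule finite_subset[of _ "{..<c}"]) (auto simp: gaps_entering_def gap_less_conductor)
  moreover have "inj_on (\<lambda>h. m - h) ?H"
    by (rule inj_onI) (metis H_le diff_diff_cancel)
  moreover have "finite (Dset S m)" by (simp add: Dset_def)
  moreover have "Dset S m \<inter> (\<lambda>h. m - h) ` ?H = {}"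
    using H_le by (force simp: Dset_def gaps_entering_def)
  moreover have "(Dset S m \<union> (\<lambda>h. m - h) ` ?H) \<inter> (M - {m}) = {}"
    using m_min(2) by (force simp: Dset_def)
  ultimately show ?thesis
    using assms m_min(1)
    by (simp add: Dunion_eq_Dset_gaps_entering card_Un_disjoint card_image card_Diff_singleton)
qed

end

theorem corollary4p8:
  fixes a b m l :: nat and M :: "nat set"
  defines "S \<equiv> gen_semigroup {a..a+b}"
  assumes "0 < b" and "b < a"
    and "2 * conductor S - 1 \<le> m"
    and "amenable S M" and "Min M = m"
    and "0 < l"
    and "M \<inter> {m..<m+a+b} = {m..<m+l}"
  shows "int (card (Dunion S M)) =
           int m - 2 * int (genus S) + int (card M)
           + (\<Sum>j=1..l-1. \<lceil>real_of_int (int a - int j) / real b\<rceil>)"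
proof -
  have large: "n \<in> S" if "conductor S \<le> n" for n
    using ge_conductor_mem[OF interval_semigroup_ge_square] that assms(2,3) unfolding S_def by auto
  have M: "finite M" "M \<noteq> {}" "\<And>x. x \<in> M \<Longrightarrow> Dset S x \<inter> {m..} \<subseteq> M"
    using assms(5,6) by (auto simp: amenable_def)
  have m_min: "m \<in> M" "\<And>x. x \<in> M \<Longrightarrow> m \<le> x"
    using Min_in[OF M(1,2)] Min_le[OF M(1)] assms(6) by auto
  have "m \<le> n \<Longrightarrow> n \<in> S" for n using large assms(4) by simp
  moreover have "{a..a+b} \<subseteq> {1..a+b}" "M \<inter> {m..<m+(a+b)} \<subseteq> {m..<m+l}"
    using assms(3,8) by (auto simp: add.assoc)
  ultimately have "h \<in> gaps_entering S l" if "h \<notin> S" "m + y \<in> M" "h + y \<in> S" for h y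
    using gap_enters_within_window[of "{a..a+b}" "a + b", folded S_def] M(3) that by blast
  then have "card (Dunion S M) = card (Dset S m) + card (gaps_entering S l) + (card M - 1)"
    using card_Dunion_eq[OF gen_semigroup.zero[of "{a..a+b}", folded S_def] large assms(4) m_min M(3) _ _ M(1)] assms(8)
    unfolding S_def by blast
  moreover have "card (Dset S m) + 2 * genus S = m + 1"
    using card_Dset_ge_twice_conductor[OF _ assms(4)] large not_le by blast
  moreover have "l \<le> a + b"
  proof (rule ccontr)
    assume "\<not> l \<le> a + b"
    then have "m + (a + b) \<in> M \<inter> {m..<m+a+b}" using assms(8) by simp
    then show False by simp
  qed
  then have "int (card (gaps_entering S l)) = (\<Sum>j=1..l-1. \<lceil>real_of_int (int a - int j) / real b\<rceil>)"
    using card_gaps_entering_interval_semigroup assms(2,3,7) unfolding S_def by simp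
  moreover have "0 < card M" using M(1,2) by (simp add: card_gt_0_iff)
  ultimately show ?thesis by simp
qed

end
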